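(* Suppose that for each $j=0,\dots,n$ the kernel $K_j$ belongs to $\mathrm{C}^2(0,2\pi)$ with $K_j''<0$ on $(0,2\pi)$. Let $S=S_\sigma$ be a simplex and let $\mathbf{y}\in S$ be such that $z_j(\mathbf{y})$ lies in the interior of $I_j(\mathbf{y})$ for each $j=0,\dots,n$. Then the Jacobian matrix of the map \[\Delta_\sigma(\mathbf{y})=\big(m_{\sigma(1)}(\mathbf{y})-m_{\sigma(0)}(\mathbf{y}),\dots,m_{\sigma(n)}(\mathbf{y})-m_{\sigma(n-1)}(\mathbf{y})\big)^\top\] at $\mathbf{y}$ is non-singular.
   Context: Identify the torus $\mathbb{T}=\mathbb{R}/2\pi\mathbb{Z}$ with $[0,2\pi)$. The kernels $K_j$ are $2\pi$-periodic functions $\mathbb{R}\to[-\infty,\infty)$, real-valued and concave on $(0,2\pi)$, with $\lim_{t\downarrow0}K_j(t)=\lim_{t\uparrow2\pi}K_j(t)$ existing in $[-\infty,\infty)$. For $\mathbf{y}\in\mathbb{T}^n$ put $y_0=0$, $y_{n+1}=2\pi$, $F(\mathbf{y},t)=K_0(t)+\sum_{j=1}^nK_j(t-y_j)$. For a permutation $\sigma$ of $\{1,\dots,n\}$ ($\sigma(0)=0,\sigma(n+1)=n+1$), $S_\sigma=\{\mathbf{y}:0<y_{\sigma(1)}<\dots<y_{\sigma(n)}<2\pi\}$; for $\mathbf{y}\in S_\sigma$, $I_{\sigma(k)}(\mathbf{y})=[y_{\sigma(k)},y_{\sigma(k+1)}]$, $m_{\sigma(k)}(\mathbf{y})=\sup_{t\in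 I_{\sigma(k)}(\mathbf{y})}F(\mathbf{y},t)$, and $z_{\sigma(k)}(\mathbf{y})$ is the unique point of $I_{\sigma(k)}(\mathbf{y})$ where $F(\mathbf{y},\cdot)$ attains this maximum. Under the hypotheses, each $m_j$ is continuously differentiable on $S_\sigma$, so the Jacobian makes sense. *)

theory Defs
  imports "HOL-Analysis.Analysis" "Jordan_Normal_Form.Determinant"
begin

text \<open>Kernels K j :: real => ereal, values in [-inf,inf); y :: nat => real, coordinates 1..n used.\<close>

definition C2_on :: "real set \<Rightarrow> (real \<Rightarrow> real) \<Rightarrow> bool" where
  "C2_on S f \<longleftrightarrow> (\<exists>f' f''. (\<forall>t\<in>S. (f has_real_derivative f' t) (at t)
        \<and> (f' has_real_derivative f'' t) (at t)) \<and> continuous_on S f'')"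

definition ext_pt :: "nat \<Rightarrow> (nat \<Rightarrow> real) \<Rightarrow> nat \<Rightarrow> real" where
  "ext_pt n y j = (if j = 0 then 0 else if j = Suc n then 2 * pi else y j)"

definition Fker :: "nat \<Rightarrow> (nat \<Rightarrow> real \<Rightarrow> ereal) \<Rightarrow> (nat \<Rightarrow> real) \<Rightarrow> real \<Rightarrow> ereal" where
  "Fker n K y t = K 0 t + (\<Sum>j\<in>{1..n}. K j (t - y j))"

text \<open>S_sigma: 0 < y_sigma(1) < ... < y_sigma(n) < 2 pi\<close>
definition simplex_sigma :: "nat \<Rightarrow> (nat \<Rightarrow> nat) \<Rightarrow> (nat \<Rightarrow> real) set" where
  "simplex_sigma n \<sigma> = {y. \<forall>k\<le>n. ext_pt n y (\<sigma> k) < ext_pt n y (\<sigma> (Suc k))}"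

text \<open>I_{sigma(k)}(y) = [y_sigma(k), y_sigma(k+1)], k = 0..n\<close>
definition Iint :: "nat \<Rightarrow> (nat \<Rightarrow> nat) \<Rightarrow> (nat \<Rightarrow> real) \<Rightarrow> nat \<Rightarrow> real set" where
  "Iint n \<sigma> y k = {ext_pt n y (\<sigma> k) .. ext_pt n y (\<sigma> (Suc k))}"

text \<open>m_{sigma(k)}(y) = sup of F(y,.) over I_{sigma(k)}(y)\<close>
definition mval :: "nat \<Rightarrow> (nat \<Rightarrow> real \<Rightarrow> ereal) \<Rightarrow> (nat \<Rightarrow> nat) \<Rightarrow> (nat \<Rightarrow> real) \<Rightarrow> nat \<Rightarrow> real" where
  "mval n K \<sigma> y k = real_of_ereal (Sup (Fker n K y ` Iint n \<sigma> y k))"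

text \<open>z_{sigma(k)}(y): the unique maximiser of F(y,.) on I_{sigma(k)}(y)\<close>
definition zval :: "nat \<Rightarrow> (nat \<Rightarrow> real \<Rightarrow> ereal) \<Rightarrow> (nat \<Rightarrow> nat) \<Rightarrow> (nat \<Rightarrow> real) \<Rightarrow> nat \<Rightarrow> real" where
  "zval n K \<sigma> y k = (THE t. t \<in> Iint n \<sigma> y k \<and>
       Fker n K y t = Sup (Fker n K y ` Iint n \<sigma> y k))"

text \<open>Delta_sigma, component k = 1..n: m_{sigma(k)} - m_{sigma(k-1)}\<close>
definition Delta :: "nat \<Rightarrow> (nat \<Rightarrow> real \<Rightarrow> ereal) \<Rightarrow> (nat \<Rightarrow> nat) \<Rightarrow> (nat \<Rightarrow> real) \<Rightarrow> nat \<Rightarrow> real" where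
  "Delta n K \<sigma> y k = mval n K \<sigma> y k - mval n K \<sigma> y (k - 1)"

definition jacobian :: "nat \<Rightarrow> (nat \<Rightarrow> real \<Rightarrow> ereal) \<Rightarrow> (nat \<Rightarrow> nat) \<Rightarrow> (nat \<Rightarrow> real) \<Rightarrow> real mat" where
  "jacobian n K \<sigma> y = mat n n (\<lambda>(r, c).
      deriv (\<lambda>s. Delta n K \<sigma> (y(Suc c := s)) (Suc r)) (y (Suc c)))"

end

theory Submission
  imports Defs
begin

text \<open>
  On each arc \<open>I\<^sub>k\<close> the function \<open>F(y,\<cdot>)\<close> is strictly concave, so its maximiser is unique and,
  by an envelope argument, \<open>\<partial>m\<^sub>k/\<partial>y\<^sub>j = -K\<^sub>j'(z\<^sub>k - y\<^sub>j)\<close> with the offset read in \<open>(0, 2\<pi>)\<close>.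
  Fix \<open>j = \<sigma>(r+1)\<close>. Cutting the circle at \<open>y\<^sub>j\<close>, the offsets \<open>z\<^sub>k - y\<^sub>j\<close> increase with \<open>k\<close>
  except for one backward jump between \<open>k = r\<close> and \<open>k = r + 1\<close>. Since \<open>K\<^sub>j'\<close> is strictly
  decreasing, the column of the Jacobian of \<open>\<Delta>\<^sub>\<sigma>\<close> belonging to \<open>y\<^sub>j\<close> has its only negative entry
  in row \<open>r\<close> and a negative sum, so row \<open>r\<close> strictly dominates that column. A matrix in which
  every row dominates some column is non-singular (Levy-Desplanques).
\<close>

definition node :: "nat \<Rightarrow> (nat \<Rightarrow> nat) \<Rightarrow> (nat \<Rightarrow> real) \<Rightarrow> nat \<Rightarrow> real" where
  "node n \<sigma> y m = ext_pt n y (\<sigma> m)"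

lemma node_ends:
  assumes "\<sigma> permutes {1..n}"
  shows "node n \<sigma> y 0 = 0" "node n \<sigma> y (Suc n) = 2 * pi"
  using assms by (auto simp: node_def ext_pt_def permutes_not_in)

lemma node_less_Suc:
  assumes "y \<in> simplex_sigma n \<sigma>" "k \<le> n"
  shows "node n \<sigma> y k < node n \<sigma> y (Suc k)"
  using assms by (auto simp: simplex_sigma_def node_def)

lemma node_less:
  assumes "y \<in> simplex_sigma n \<sigma>" "m < m'" "m' \<le> Suc n"
  shows "node n \<sigma> y m < node n \<sigma> y m'"
  using assms(2,3)
proof (induction m' rule: less_induct)
  case (less m')
  then obtain q where q: "m' = Suc q" by (cases m') auto
  show ?case
  proof (cases "m = q")
    case True
    then show ?thesis using node_less_Suc[OF assms(1), of q] less q by auto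
  next
    case False
    then have "node n \<sigma> y m < node n \<sigma> y q" using less q by auto
    then show ?thesis using node_less_Suc[OF assms(1), of q] less q by auto
  qed
qed

lemma node_le:
  assumes "y \<in> simplex_sigma n \<sigma>" "m \<le> m'" "m' \<le> Suc n"
  shows "node n \<sigma> y m \<le> node n \<sigma> y m'"
  using node_less[OF assms(1), of m m'] assms by (cases "m = m'") auto

lemma node_arc_bounds:
  assumes "\<sigma> permutes {1..n}" "y \<in> simplex_sigma n \<sigma>" "k \<le> n"
  shows "0 \<le> node n \<sigma> y k" "node n \<sigma> y (Suc k) \<le> 2 * pi"
  using node_le[OF assms(2), of 0 k] node_le[OF assms(2), of "Suc k" "Suc n"] node_ends[OF assms(1)]
    assms(3) by auto

lemma Iint_node: "Iint n \<sigma> y k = {node n \<sigma> y k .. node n \<sigma> y (Suc k)}"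
  by (simp add: Iint_def node_def)

lemma zval_in_arc:
  assumes "\<And>k. k \<le> n \<Longrightarrow> zval n K \<sigma> y k \<in> interior (Iint n \<sigma> y k)" "k \<le> n"
  shows "node n \<sigma> y k < zval n K \<sigma> y k" "zval n K \<sigma> y k < node n \<sigma> y (Suc k)"
  using assms by (auto simp: Iint_node)

lemma ext_pt_coord: "j \<in> {1..n} \<Longrightarrow> ext_pt n y j = y j"
  by (auto simp: ext_pt_def)

lemma ext_pt_eq_node:
  assumes "\<sigma> permutes {1..n}" "i \<le> n"
  obtains m where "m \<le> n" "ext_pt n y i = node n \<sigma> y m"
proof
  have inv: "inv_into UNIV \<sigma> permutes {1..n}" using permutes_inv[OF assms(1)] .
  show "inv_into UNIV \<sigma> i \<le> n"
  proof (cases "i = 0")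
    case True
    then show ?thesis using inv by (simp add: permutes_not_in)
  next
    case False
    then have "i \<in> {1..n}" using assms(2) by auto
    then show ?thesis using permutes_in_image[OF inv] by auto
  qed
  show "ext_pt n y i = node n \<sigma> y (inv_into UNIV \<sigma> i)"
    unfolding node_def using permutes_inverses(1)[OF assms(1)] by simp
qed

lemma ext_pt_bounds:
  assumes "\<sigma> permutes {1..n}" "y \<in> simplex_sigma n \<sigma>" "i \<le> n"
  shows "0 \<le> ext_pt n y i" "ext_pt n y i < 2 * pi"
proof -
  obtain m where m: "m \<le> n" "ext_pt n y i = node n \<sigma> y m"
    using ext_pt_eq_node[OF assms(1,3)] .
  show "0 \<le> ext_pt n y i" "ext_pt n y i < 2 * pi"
    using node_le[OF assms(2), of 0 m] node_less[OF assms(2), of m "Suc n"] node_ends[OF assms(1)] m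
    by auto
qed

lemma ext_pt_outside_arc:
  assumes "\<sigma> permutes {1..n}" "y \<in> simplex_sigma n \<sigma>" "i \<le> n" "k \<le> n"
  shows "ext_pt n y i \<le> node n \<sigma> y k \<or> node n \<sigma> y (Suc k) \<le> ext_pt n y i"
proof -
  obtain m where m: "m \<le> n" "ext_pt n y i = node n \<sigma> y m"
    using ext_pt_eq_node[OF assms(1,3)] .
  show ?thesis
    using node_le[OF assms(2), of m k] node_le[OF assms(2), of "Suc k" m] m assms(4) by linarith
qed

lemma ext_pt_update:
  "j \<in> {1..n} \<Longrightarrow> ext_pt n (y(j := s)) i = (if i = j then s else ext_pt n y i)"
  by (auto simp: ext_pt_def)

lemma node_update_dist:
  assumes "j \<in> {1..n}"
  shows "\<bar>node n \<sigma> (y(j := s)) m - node n \<sigma> y m\<bar> \<le> \<bar>s - y j\<bar>"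
  using ext_pt_update[OF assms] ext_pt_coord[OF assms] by (auto simp: node_def)

lemma simplex_sigma_update:
  assumes yS: "y \<in> simplex_sigma n \<sigma>" and j: "j \<in> {1..n}"
  obtains g where "g > 0" "\<And>s. \<bar>s - y j\<bar> < g \<Longrightarrow> y(j := s) \<in> simplex_sigma n \<sigma>"
proof
  define g where "g = Min ((\<lambda>m. node n \<sigma> y (Suc m) - node n \<sigma> y m) ` {..n}) / 2"
  have "0 < Min ((\<lambda>m. node n \<sigma> y (Suc m) - node n \<sigma> y m) ` {..n})"
    using node_less_Suc[OF yS] by (subst Min_gr_iff) auto
  then show "g > 0" unfolding g_def by simp
  have gap: "2 * g \<le> node n \<sigma> y (Suc m) - node n \<sigma> y m" if "m \<le> n" for m
    unfolding g_def using that by (auto intro: Min_le)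
  fix s assume s: "\<bar>s - y j\<bar> < g"
  have "node n \<sigma> (y(j := s)) m < node n \<sigma> (y(j := s)) (Suc m)" if "m \<le> n" for m
    using node_update_dist[OF j, of \<sigma> y s m] node_update_dist[OF j, of \<sigma> y s "Suc m"] gap[OF that] s
    by linarith
  then show "y(j := s) \<in> simplex_sigma n \<sigma>" by (auto simp: simplex_sigma_def node_def)
qed

lemma tendsto_sum_ereal_general:
  fixes f :: "'i \<Rightarrow> 'a \<Rightarrow> ereal"
  assumes "finite A" "\<And>i. i \<in> A \<Longrightarrow> (f i \<longlongrightarrow> l i) F" "\<And>i. i \<in> A \<Longrightarrow> l i \<noteq> \<infinity>"
  shows "((\<lambda>x. \<Sum>i\<in>A. f i x) \<longlongrightarrow> (\<Sum>i\<in>A. l i)) F"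
  using assms
proof (induction A rule: finite_induct)
  case empty
  then show ?case by simp
next
  case (insert a A)
  have "(\<Sum>i\<in>A. l i) \<noteq> \<infinity>" using insert sum_Pinfty[of l A] by auto
  then have "((\<lambda>x. f a x + (\<Sum>i\<in>A. f i x)) \<longlongrightarrow> l a + (\<Sum>i\<in>A. l i)) F"
    using insert by (intro tendsto_add_ereal_general) auto
  then show ?case using insert by simp
qed

lemma chord_slopes_strict_decrease:
  fixes g g' :: "real \<Rightarrow> real"
  assumes pqr: "p < q" "q < r"
    and cont: "continuous_on {p..r} g"
    and der: "\<And>x. p < x \<Longrightarrow> x < r \<Longrightarrow> (g has_real_derivative g' x) (at x)"
    and dec: "\<And>x1 x2. p < x1 \<Longrightarrow> x1 < x2 \<Longrightarrow> x2 < r \<Longrightarrow> g' x2 < g' x1"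
  shows "(g r - g q) / (r - q) < (g q - g p) / (q - p)"
proof -
  have diff: "g differentiable (at x)" if "p < x" "x < r" for x
    using der[OF that] real_differentiable_def by blast
  have "continuous_on {p..q} g" "continuous_on {q..r} g"
    using cont pqr by (auto intro: continuous_on_subset)
  then obtain l1 x1 l2 x2 where
      x1: "p < x1" "x1 < q" "(g has_real_derivative l1) (at x1)" "g q - g p = (q - p) * l1" and
      x2: "q < x2" "x2 < r" "(g has_real_derivative l2) (at x2)" "g r - g q = (r - q) * l2"
    using MVT[OF pqr(1), of g] MVT[OF pqr(2), of g] diff pqr by auto
  have "l1 = g' x1" using DERIV_unique[OF x1(3) der[of x1]] x1 pqr by auto
  moreover have "l2 = g' x2" using DERIV_unique[OF x2(3) der[of x2]] x2 pqr by auto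
  moreover have "g' x2 < g' x1" using dec x1 x2 pqr by auto
  ultimately show ?thesis using x1(4) x2(4) pqr by auto
qed

lemma uniform_linearization:
  fixes f f' :: "real \<Rightarrow> real"
  assumes "r > 0" and der: "\<And>x. \<bar>x - c\<bar> < r \<Longrightarrow> (f has_real_derivative f' x) (at x)"
    and "isCont f' c" "\<eta> > 0"
  obtains \<rho> where "\<rho> > 0"
    "\<And>u v. \<bar>u - c\<bar> < \<rho> \<Longrightarrow> \<bar>v - c\<bar> < \<rho> \<Longrightarrow> \<bar>f v - f u - (v - u) * f' c\<bar> \<le> \<eta> * \<bar>v - u\<bar>"
proof -
  obtain \<rho>1 where "\<rho>1 > 0" and \<rho>1: "\<And>x. \<bar>x - c\<bar> < \<rho>1 \<Longrightarrow> \<bar>f' x - f' c\<bar> < \<eta>"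
    using \<open>isCont f' c\<close>[unfolded continuous_at_eps_delta dist_real_def] \<open>\<eta> > 0\<close> by blast
  define \<rho> where "\<rho> = min r \<rho>1"
  show ?thesis
  proof (rule that)
    show "\<rho> > 0" using \<open>r > 0\<close> \<open>\<rho>1 > 0\<close> by (simp add: \<rho>_def)
    fix u v assume "\<bar>u - c\<bar> < \<rho>" "\<bar>v - c\<bar> < \<rho>"
    then have "closed_segment u v \<subseteq> ball c \<rho>"
      by (intro closed_segment_subset convex_ball) (auto simp: dist_real_def abs_minus_commute)
    moreover have "(f has_vector_derivative f' x) (at x within ball c \<rho>)" if "x \<in> ball c \<rho>" for x
      using der[of x] that
      by (auto simp: \<rho>_def dist_real_def abs_minus_commute has_real_derivative_iff_has_vector_derivative
          at_within_open[OF _ open_ball])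
    moreover have "norm (f' x - f' c) \<le> \<eta>" if "x \<in> ball c \<rho>" for x
      using \<rho>1[of x] that by (simp add: \<rho>_def dist_real_def abs_minus_commute)
    ultimately show "\<bar>f v - f u - (v - u) * f' c\<bar> \<le> \<eta> * \<bar>v - u\<bar>"
      using vector_differentiable_bound_linearization[of "ball c \<rho>" f f' u v c \<eta>] \<open>\<rho> > 0\<close>
      by (simp add: mult.commute)
  qed
qed

lemma DERIV_if_linear_approx:
  fixes g :: "real \<Rightarrow> real"
  assumes approx: "\<And>\<eta>. \<eta> > 0 \<Longrightarrow>
      \<exists>\<delta>>0. \<forall>s. \<bar>s - s0\<bar> < \<delta> \<longrightarrow> \<bar>g s - g s0 - (s - s0) * D\<bar> \<le> \<eta> * \<bar>s - s0\<bar>"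
  shows "(g has_real_derivative D) (at s0)"
  unfolding has_field_derivative_iff LIM_eq
proof (intro allI impI)
  fix e :: real assume "e > 0"
  then obtain \<delta> where "\<delta> > 0"
    and \<delta>: "\<And>s. \<bar>s - s0\<bar> < \<delta> \<Longrightarrow> \<bar>g s - g s0 - (s - s0) * D\<bar> \<le> e / 2 * \<bar>s - s0\<bar>"
    using approx[of "e / 2"] by auto
  have "\<bar>(g s - g s0) / (s - s0) - D\<bar> < e" if "s \<noteq> s0" "\<bar>s - s0\<bar> < \<delta>" for s
  proof -
    have "(g s - g s0) / (s - s0) - D = (g s - g s0 - (s - s0) * D) / (s - s0)"
      using that by (simp add: field_simps)
    then have "\<bar>(g s - g s0) / (s - s0) - D\<bar> \<le> e / 2"
      using \<delta>[OF that(2)] that(1) by (simp add: abs_divide divide_le_eq)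
    then show ?thesis using \<open>e > 0\<close> by linarith
  qed
  then show "\<exists>\<delta>>0. \<forall>s. s \<noteq> s0 \<and> norm (s - s0) < \<delta> \<longrightarrow> norm ((g s - g s0) / (s - s0) - D) < e"
    using \<open>\<delta> > 0\<close> by auto
qed

lemma det_nonzero_if_column_dominant:
  fixes J :: "'a :: linordered_field mat"
  assumes J: "J \<in> carrier_mat n n"
    and dom: "\<And>r0. r0 < n \<Longrightarrow>
      p r0 < n \<and> (\<Sum>r\<in>{..<n} - {r0}. \<bar>J $$ (r, p r0)\<bar>) < \<bar>J $$ (r0, p r0)\<bar>"
  shows "Determinant.det J \<noteq> 0"
proof
  assume "Determinant.det J = 0"
  then obtain v where v: "v \<in> carrier_vec n" "v \<noteq> 0\<^sub>v n" "transpose_mat J *\<^sub>v v = 0\<^sub>v n"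
    using det_0_iff_vec_prod_zero[of "transpose_mat J" n] det_transpose[OF J] J by auto
  have column: "(\<Sum>r<n. J $$ (r, c) * v $ r) = 0" if "c < n" for c
  proof -
    have "(\<Sum>r<n. J $$ (r, c) * v $ r) = col J c \<bullet> v"
      using J v(1) that by (auto simp: scalar_prod_def lessThan_atLeast0 intro: sum.cong)
    also have "\<dots> = (transpose_mat J *\<^sub>v v) $ c" using J that by simp
    finally show ?thesis using v(3) that by simp
  qed
  obtain r1 where r1: "r1 < n" "v $ r1 \<noteq> 0"
    using v(1,2) by (metis carrier_vecD eq_vecI index_zero_vec(1,2))
  define V where "V = Max ((\<lambda>r. \<bar>v $ r\<bar>) ` {..<n})"
  have V_ge: "\<bar>v $ r\<bar> \<le> V" if "r < n" for r unfolding V_def using that by (intro Max_ge) auto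
  have "V \<in> (\<lambda>r. \<bar>v $ r\<bar>) ` {..<n}" unfolding V_def using r1(1) by (intro Max_in) auto
  then obtain r0 where r0: "r0 < n" "\<bar>v $ r0\<bar> = V" by auto
  have "V > 0" using V_ge[OF r1(1)] r1(2) by auto
  define a where "a r = J $$ (r, p r0)" for r
  have split: "(\<Sum>r<n. f r) = f r0 + (\<Sum>r\<in>{..<n} - {r0}. f r)" for f :: "nat \<Rightarrow> 'a"
    using sum.remove[of "{..<n}" r0 f] r0 by auto
  have "a r0 * v $ r0 = - (\<Sum>r\<in>{..<n} - {r0}. a r * v $ r)"
    using column[of "p r0"] dom[OF r0(1)] split[of "\<lambda>r. a r * v $ r"]
    by (simp add: a_def eq_neg_iff_add_eq_0)
  then have "\<bar>a r0\<bar> * V = \<bar>\<Sum>r\<in>{..<n} - {r0}. a r * v $ r\<bar>"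
    using r0(2) by (metis abs_minus_cancel abs_mult)
  also have "\<dots> \<le> (\<Sum>r\<in>{..<n} - {r0}. \<bar>a r\<bar> * V)"
    using V_ge by (intro order.trans[OF sum_abs sum_mono]) (auto simp: abs_mult mult_left_mono)
  also have "\<dots> < \<bar>a r0\<bar> * V"
    using dom[OF r0(1)] \<open>V > 0\<close> by (simp add: a_def sum_distrib_right[symmetric])
  finally show False by simp
qed

lemma wrapped_differences_dominant:
  fixes z :: "nat \<Rightarrow> real" and f :: "real \<Rightarrow> real"
  assumes z_mono: "\<And>k k'. k < k' \<Longrightarrow> k' \<le> n \<Longrightarrow> z k < z k'"
    and z_bounds: "0 < z 0" "z n < 2 * pi"
    and r0: "r0 < n" "z r0 < P" "P < z (Suc r0)"
    and f_dec: "\<And>a b. 0 < a \<Longrightarrow> a < b \<Longrightarrow> b < 2 * pi \<Longrightarrow> f b < f a"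
  defines "T k \<equiv> z k - P + (if k \<le> r0 then 2 * pi else 0)"
  shows "(\<Sum>r\<in>{..<n} - {r0}. \<bar>f (T r) - f (T (Suc r))\<bar>) < \<bar>f (T r0) - f (T (Suc r0))\<bar>"
proof -
  have z_le: "z k \<le> z k'" if "k \<le> k'" "k' \<le> n" for k k'
    using z_mono[of k k'] that by (cases "k = k'") auto
  have T_bounds: "0 < T k \<and> T k < 2 * pi" if "k \<le> n" for k
    using z_le[of 0 k] z_le[of k r0] z_le[of k n] z_le[of "Suc r0" k] z_le[of 0 r0]
      z_le[of "Suc r0" n] that z_bounds r0
    by (cases "k \<le> r0") (auto simp: T_def)
  define a where "a r = f (T r) - f (T (Suc r))" for r
  have a_pos: "0 < a r" if "r < n" "r \<noteq> r0" for r
  proof -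
    have "T r < T (Suc r)" using z_mono[of r "Suc r"] that by (auto simp: T_def)
    then show ?thesis using f_dec T_bounds that by (simp add: a_def)
  qed
  have "T (Suc r0) < T r0" using z_le[of "Suc r0" n] z_le[of 0 r0] z_bounds r0 by (simp add: T_def)
  then have a_neg: "a r0 < 0" using f_dec T_bounds r0 by (simp add: a_def)
  have "T n < T 0" using z_bounds r0 by (simp add: T_def)
  have "(\<Sum>r<n. a r) = f (T 0) - f (T n)" unfolding a_def by (rule sum_lessThan_telescope')
  also have "\<dots> < 0" using f_dec[of "T n" "T 0"] T_bounds[of 0] T_bounds[of n] \<open>T n < T 0\<close> by simp
  finally have "(\<Sum>r<n. a r) < 0" .
  have "(\<Sum>r\<in>{..<n} - {r0}. \<bar>a r\<bar>) = (\<Sum>r\<in>{..<n} - {r0}. a r)"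
    using a_pos by (intro sum.cong) (auto simp: less_imp_le)
  also have "\<dots> = (\<Sum>r<n. a r) - a r0" using sum.remove[of "{..<n}" r0 a] r0 by simp
  also have "\<dots> < \<bar>a r0\<bar>" using \<open>(\<Sum>r<n. a r) < 0\<close> a_neg by simp
  finally show ?thesis unfolding a_def .
qed

locale smooth_kernels =
  fixes n :: nat and K :: "nat \<Rightarrow> real \<Rightarrow> ereal"
  assumes periodic: "\<And>j t. j \<le> n \<Longrightarrow> K j (t + 2 * pi) = K j t"
    and real_valued: "\<And>j t. j \<le> n \<Longrightarrow> t \<in> {0<..<2 * pi} \<Longrightarrow> K j t \<noteq> -\<infinity> \<and> K j t \<noteq> \<infinity>"
    and not_pinf: "\<And>j. j \<le> n \<Longrightarrow> K j 0 \<noteq> \<infinity>"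
    and lim0: "\<And>j. j \<le> n \<Longrightarrow> (K j \<longlongrightarrow> K j 0) (at_right 0)"
    and lim2pi: "\<And>j. j \<le> n \<Longrightarrow> (K j \<longlongrightarrow> K j 0) (at_left (2 * pi))"
    and C2: "\<And>j. j \<le> n \<Longrightarrow> C2_on {0<..<2 * pi} (\<lambda>t. real_of_ereal (K j t))"
    and neg2: "\<And>j t. j \<le> n \<Longrightarrow> t \<in> {0<..<2 * pi} \<Longrightarrow>
                  deriv (deriv (\<lambda>t. real_of_ereal (K j t))) t < 0"
begin

definition Kr :: "nat \<Rightarrow> real \<Rightarrow> real" where
  "Kr j t = real_of_ereal (K j t)"

definition dK :: "nat \<Rightarrow> real \<Rightarrow> real" where
  "dK j = deriv (Kr j)"

definition wrap :: "real \<Rightarrow> real" where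
  "wrap u = (if 0 < u then u else u + 2 * pi)"

lemma Kr_periodic: "j \<le> n \<Longrightarrow> Kr j (t + 2 * pi) = Kr j t"
  by (simp add: Kr_def periodic)

lemma K_eq_Kr:
  assumes "j \<le> n" "-2 * pi < u" "u < 2 * pi" "u \<noteq> 0"
  shows "K j u = ereal (Kr j u)"
proof -
  have inner: "K j v = ereal (Kr j v)" if "0 < v" "v < 2 * pi" for v
    using real_valued[OF assms(1), of v] that by (cases "K j v") (auto simp: Kr_def)
  show ?thesis
  proof (cases "0 < u")
    case True
    then show ?thesis using inner assms by auto
  next
    case False
    then have "K j u = K j (u + 2 * pi)" using periodic[OF assms(1), of u] by simp
    also have "\<dots> = ereal (Kr j (u + 2 * pi))" using inner assms False by auto
    finally show ?thesis using Kr_periodic[OF assms(1)] by simp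
  qed
qed

lemma Kr_derivatives:
  assumes "j \<le> n" "0 < t" "t < 2 * pi"
  shows "(Kr j has_real_derivative dK j t) (at t)"
    and "\<exists>D. (dK j has_real_derivative D) (at t) \<and> D < 0"
proof -
  obtain f' f'' where ff: "\<forall>t\<in>{0<..<2 * pi}. (Kr j has_real_derivative f' t) (at t)
        \<and> (f' has_real_derivative f'' t) (at t)"
    using C2[OF assms(1)] unfolding C2_on_def Kr_def[abs_def] by blast
  then have dK_eq: "dK j s = f' s" if "s \<in> {0<..<2 * pi}" for s
    unfolding dK_def using that DERIV_imp_deriv by blast
  show "(Kr j has_real_derivative dK j t) (at t)" using ff dK_eq assms by auto
  have "(dK j has_real_derivative f'' t) (at t)"
    by (rule has_field_derivative_transform_within_open[of f' _ _ "{0<..<2 * pi}"])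
       (use ff assms dK_eq in auto)
  moreover have "deriv (dK j) t < 0"
    using neg2[OF assms(1), of t] assms unfolding dK_def Kr_def[abs_def] by auto
  ultimately show "\<exists>D. (dK j has_real_derivative D) (at t) \<and> D < 0"
    using DERIV_imp_deriv by metis
qed

lemma dK_strict_decreasing:
  assumes "j \<le> n" "0 < a" "a < b" "b < 2 * pi"
  shows "dK j b < dK j a"
  by (rule DERIV_neg_imp_decreasing) (use assms Kr_derivatives(2) in auto)

lemma isCont_dK: "j \<le> n \<Longrightarrow> 0 < t \<Longrightarrow> t < 2 * pi \<Longrightarrow> isCont (dK j) t"
  using Kr_derivatives(2) DERIV_isCont by blast

lemma Kr_has_derivative:
  assumes "j \<le> n" "-2 * pi < u" "u < 2 * pi" "u \<noteq> 0"
  shows "(Kr j has_real_derivative dK j (wrap u)) (at u)"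
proof (cases "0 < u")
  case True
  then show ?thesis using Kr_derivatives(1)[OF assms(1)] assms by (auto simp: wrap_def)
next
  case False
  then have "(Kr j has_real_derivative dK j (u + 2 * pi)) (at (u + 2 * pi))"
    using Kr_derivatives(1)[OF assms(1)] assms by auto
  then have "((\<lambda>x. Kr j (x + 2 * pi)) has_real_derivative dK j (u + 2 * pi)) (at u)"
    using DERIV_shift by blast
  then show ?thesis using False Kr_periodic[OF assms(1)] by (simp add: wrap_def)
qed

lemma isCont_dK_wrap:
  assumes "j \<le> n" "-2 * pi < c" "c < 2 * pi" "c \<noteq> 0"
  shows "isCont (\<lambda>u. dK j (wrap u)) c"
proof (cases "0 < c")
  case True
  have "\<forall>\<^sub>F u in nhds c. dK j (wrap u) = dK j u"
    using eventually_nhds_in_open[of "{0<..}" c] True by (auto elim!: eventually_mono simp: wrap_def)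
  then have "isCont (\<lambda>u. dK j (wrap u)) c \<longleftrightarrow> isCont (dK j) c" by (rule isCont_cong)
  then show ?thesis using isCont_dK[OF assms(1) True assms(3)] by simp
next
  case False
  then have "\<forall>\<^sub>F u in nhds c. dK j (wrap u) = dK j (u + 2 * pi)"
    using eventually_nhds_in_open[of "{..<0}" c] assms(4) by (auto elim!: eventually_mono simp: wrap_def)
  then have "isCont (\<lambda>u. dK j (wrap u)) c \<longleftrightarrow> isCont (\<lambda>u. dK j (u + 2 * pi)) c"
    by (rule isCont_cong)
  moreover have "isCont (\<lambda>u. dK j (u + 2 * pi)) c"
    using False assms by (intro isCont_o2[OF _ isCont_dK[OF assms(1)]]) auto
  ultimately show ?thesis by simp
qed

lemma isCont_K_inner:
  assumes "j \<le> n" "0 < u" "u < 2 * pi"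
  shows "isCont (K j) u"
proof -
  have "isCont (\<lambda>v. ereal (Kr j v)) u"
    using Kr_derivatives(1)[OF assms] DERIV_isCont by (intro continuous_intros) blast
  moreover have "\<forall>\<^sub>F v in nhds u. K j v = ereal (Kr j v)"
    using eventually_nhds_in_open[of "{0<..<2 * pi}" u] assms
    by (auto elim!: eventually_mono intro: K_eq_Kr[OF assms(1)])
  then have "isCont (K j) u \<longleftrightarrow> isCont (\<lambda>v. ereal (Kr j v)) u" by (rule isCont_cong)
  ultimately show ?thesis by simp
qed

lemma isCont_K_0:
  assumes "j \<le> n"
  shows "isCont (K j) 0"
proof -
  have shift: "filterlim (\<lambda>v. v + 2 * pi) (at_left (2 * pi)) (at_left (0::real))"
    unfolding filterlim_at
  proof
    show "\<forall>\<^sub>F x in at_left 0. x + 2 * pi \<in> {..<2 * pi} \<and> x + 2 * pi \<noteq> 2 * pi"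
      by (auto simp: eventually_at_filter)
    show "((\<lambda>x. x + 2 * pi) \<longlongrightarrow> 2 * pi) (at_left 0)"
      using tendsto_add[OF tendsto_ident_at[of 0 "{..<0}"] tendsto_const[of "2 * pi"]] by simp
  qed
  have "((\<lambda>v. K j (v + 2 * pi)) \<longlongrightarrow> K j 0) (at_left 0)"
    using filterlim_compose[OF lim2pi[OF assms] shift] .
  then have "(K j \<longlongrightarrow> K j 0) (at_left 0)" using periodic[OF assms] by simp
  then show ?thesis unfolding isCont_def using lim0[OF assms] filterlim_split_at by blast
qed

lemma isCont_K:
  assumes "j \<le> n" "-2 * pi \<le> u" "u \<le> 2 * pi"
  shows "isCont (K j) u"
proof -
  have base: "isCont (K j) v" if "0 \<le> v" "v < 2 * pi" for v
    using isCont_K_0[OF assms(1)] isCont_K_inner[OF assms(1)] that by (cases "v = 0") auto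
  consider "u < 0" | "0 \<le> u" "u < 2 * pi" | "u = 2 * pi" using assms by linarith
  then show ?thesis
  proof cases
    case 1
    have "isCont (\<lambda>v. K j (v + 2 * pi)) u"
      by (rule isCont_o2[OF _ base]) (use 1 assms in \<open>auto intro!: continuous_intros\<close>)
    then show ?thesis using periodic[OF assms(1)] by simp
  next
    case 3
    have "isCont (\<lambda>v. K j (v - 2 * pi)) u"
      by (rule isCont_o2[OF _ base]) (use 3 in \<open>auto intro!: continuous_intros\<close>)
    moreover have "(\<lambda>v. K j (v - 2 * pi)) = K j" using periodic[OF assms(1), of "_ - 2 * pi"] by auto
    ultimately show ?thesis by simp
  qed (use base in auto)
qed

lemma K_not_pinf:
  assumes "j \<le> n" "-2 * pi \<le> u" "u \<le> 2 * pi"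
  shows "K j u \<noteq> \<infinity>"
proof -
  consider "u = -2 * pi" | "u = 0" | "u = 2 * pi" | "-2 * pi < u \<and> u < 2 * pi \<and> u \<noteq> 0"
    using assms by fastforce
  then show ?thesis
  proof cases
    case 1
    then show ?thesis using periodic[OF assms(1), of "-2 * pi"] not_pinf[OF assms(1)] by simp
  next
    case 3
    then show ?thesis using periodic[OF assms(1), of 0] not_pinf[OF assms(1)] by simp
  qed (use not_pinf[OF assms(1)] K_eq_Kr[OF assms(1)] in auto)
qed


definition Fr :: "(nat \<Rightarrow> real) \<Rightarrow> real \<Rightarrow> real" where
  "Fr y t = (\<Sum>i\<le>n. Kr i (t - ext_pt n y i))"

definition Fr' :: "(nat \<Rightarrow> real) \<Rightarrow> real \<Rightarrow> real" where
  "Fr' y t = (\<Sum>i\<le>n. dK i (wrap (t - ext_pt n y i)))"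

lemma Fker_eq_sum: "Fker n K y t = (\<Sum>i\<le>n. K i (t - ext_pt n y i))"
proof -
  have "{..n} = insert 0 {1..n}" by auto
  then have "(\<Sum>i\<le>n. K i (t - ext_pt n y i)) = K 0 t + (\<Sum>i\<in>{1..n}. K i (t - ext_pt n y i))"
    by (simp add: ext_pt_def)
  also have "(\<Sum>i\<in>{1..n}. K i (t - ext_pt n y i)) = (\<Sum>i\<in>{1..n}. K i (t - y i))"
    by (rule sum.cong) (auto simp: ext_pt_coord)
  finally show ?thesis by (simp add: Fker_def)
qed

lemma arc_offset_bounds:
  assumes perm: "\<sigma> permutes {1..n}" and yS: "y \<in> simplex_sigma n \<sigma>" and k: "k \<le> n"
    and t: "node n \<sigma> y k < t" "t < node n \<sigma> y (Suc k)" and i: "i \<le> n"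
  shows "-2 * pi < t - ext_pt n y i" "t - ext_pt n y i < 2 * pi" "t - ext_pt n y i \<noteq> 0"
    and "0 < t - ext_pt n y i \<longleftrightarrow> ext_pt n y i \<le> node n \<sigma> y k"
  using node_arc_bounds[OF perm yS k] ext_pt_bounds[OF perm yS i] ext_pt_outside_arc[OF perm yS i k] t
  by auto

lemma Fker_eq_Fr:
  assumes perm: "\<sigma> permutes {1..n}" and yS: "y \<in> simplex_sigma n \<sigma>" and k: "k \<le> n"
    and t: "node n \<sigma> y k < t" "t < node n \<sigma> y (Suc k)"
  shows "Fker n K y t = ereal (Fr y t)"
proof -
  have "Fker n K y t = (\<Sum>i\<le>n. ereal (Kr i (t - ext_pt n y i)))"
    unfolding Fker_eq_sum by (rule sum.cong) (use arc_offset_bounds[OF assms] K_eq_Kr in auto)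
  then show ?thesis by (simp add: Fr_def)
qed

lemma Fr_has_derivative:
  assumes perm: "\<sigma> permutes {1..n}" and yS: "y \<in> simplex_sigma n \<sigma>" and k: "k \<le> n"
    and t: "node n \<sigma> y k < t" "t < node n \<sigma> y (Suc k)"
  shows "(Fr y has_real_derivative Fr' y t) (at t)"
  unfolding Fr_def[abs_def] Fr'_def
proof (rule DERIV_sum)
  fix i assume "i \<in> {..n}"
  then have "(Kr i has_real_derivative dK i (wrap (t - ext_pt n y i))) (at (t - ext_pt n y i))"
    using Kr_has_derivative arc_offset_bounds[OF assms] by auto
  moreover have "((\<lambda>x. x - ext_pt n y i) has_real_derivative 1) (at t)"
    by (auto intro!: derivative_eq_intros)
  ultimately show
    "((\<lambda>x. Kr i (x - ext_pt n y i)) has_real_derivative dK i (wrap (t - ext_pt n y i))) (at t)"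
    using DERIV_chain2 by fastforce
qed

lemma Fr'_strict_decreasing:
  assumes perm: "\<sigma> permutes {1..n}" and yS: "y \<in> simplex_sigma n \<sigma>" and k: "k \<le> n"
    and t: "node n \<sigma> y k < t1" "t1 < t2" "t2 < node n \<sigma> y (Suc k)"
  shows "Fr' y t2 < Fr' y t1"
  unfolding Fr'_def
proof (rule sum_strict_mono)
  fix i assume i: "i \<in> {..n}"
  note b1 = arc_offset_bounds[OF perm yS k, of t1 i] and b2 = arc_offset_bounds[OF perm yS k, of t2 i]
  show "dK i (wrap (t2 - ext_pt n y i)) < dK i (wrap (t1 - ext_pt n y i))"
  proof (cases "ext_pt n y i \<le> node n \<sigma> y k")
    case True
    then show ?thesis using b1 b2 t i dK_strict_decreasing[of i "t1 - ext_pt n y i" "t2 - ext_pt n y i"]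
      by (auto simp: wrap_def)
  next
    case False
    then show ?thesis
      using b1 b2 t i dK_strict_decreasing[of i "t1 - ext_pt n y i + 2 * pi" "t2 - ext_pt n y i + 2 * pi"]
      by (auto simp: wrap_def)
  qed
qed auto

lemma Fker_continuous_finite:
  assumes perm: "\<sigma> permutes {1..n}" and yS: "y \<in> simplex_sigma n \<sigma>" and t: "0 \<le> t" "t \<le> 2 * pi"
  shows "isCont (Fker n K y) t" "Fker n K y t \<noteq> \<infinity>"
proof -
  have cont: "isCont (\<lambda>t. K i (t - ext_pt n y i)) t" if "i \<le> n" for i
    using ext_pt_bounds[OF perm yS that] t that
    by (intro isCont_o2[OF _ isCont_K]) (auto intro!: continuous_intros)
  have fin: "K i (t - ext_pt n y i) \<noteq> \<infinity>" if "i \<le> n" for i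
    using K_not_pinf[OF that] ext_pt_bounds[OF perm yS that] t by auto
  have "Fker n K y = (\<lambda>t. \<Sum>i\<le>n. K i (t - ext_pt n y i))" using Fker_eq_sum by auto
  then show "isCont (Fker n K y) t" unfolding isCont_def
    using cont fin by (auto simp: isCont_def intro!: tendsto_sum_ereal_general)
  show "Fker n K y t \<noteq> \<infinity>" unfolding Fker_eq_sum sum_Pinfty using fin by auto
qed

lemma Fker_arc_continuous_finite:
  assumes perm: "\<sigma> permutes {1..n}" and yS: "y \<in> simplex_sigma n \<sigma>" and k: "k \<le> n"
  shows "continuous_on (Iint n \<sigma> y k) (Fker n K y)"
    and "\<And>t. t \<in> Iint n \<sigma> y k \<Longrightarrow> Fker n K y t \<noteq> \<infinity>"
  using Fker_continuous_finite[OF perm yS] node_arc_bounds[OF perm yS k]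
  by (auto simp: Iint_node intro!: continuous_at_imp_continuous_on)

lemma Fker_slopes_decrease:
  assumes perm: "\<sigma> permutes {1..n}" and yS: "y \<in> simplex_sigma n \<sigma>" and k: "k \<le> n"
    and pqr: "node n \<sigma> y k \<le> p" "p < q" "q < r" "r \<le> node n \<sigma> y (Suc k)"
    and finite: "Fker n K y p \<noteq> -\<infinity>" "Fker n K y r \<noteq> -\<infinity>"
  shows "(real_of_ereal (Fker n K y r) - real_of_ereal (Fker n K y q)) / (r - q)
       < (real_of_ereal (Fker n K y q) - real_of_ereal (Fker n K y p)) / (q - p)"
proof (rule chord_slopes_strict_decrease[where g' = "Fr' y"])
  let ?F = "Fker n K y"
  have sub: "{p..r} \<subseteq> Iint n \<sigma> y k" using pqr by (auto simp: Iint_node)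
  have "?F t \<noteq> \<infinity> \<and> ?F t \<noteq> -\<infinity>" if "t \<in> {p..r}" for t
  proof (cases "t = p \<or> t = r")
    case False
    then show ?thesis using Fker_eq_Fr[OF perm yS k, of t] that pqr by auto
  qed (use finite Fker_arc_continuous_finite(2)[OF perm yS k] sub that in auto)
  then show "continuous_on {p..r} (\<lambda>t. real_of_ereal (?F t))"
    using continuous_on_subset[OF Fker_arc_continuous_finite(1)[OF perm yS k] sub]
    by (intro continuous_on_compose2[OF continuous_on_real]) auto
  show "((\<lambda>t. real_of_ereal (?F t)) has_real_derivative Fr' y x) (at x)" if "p < x" "x < r" for x
  proof (rule has_field_derivative_transform_within_open[of "Fr y" _ _ "{node n \<sigma> y k<..<node n \<sigma> y (Suc k)}"])
    show "(Fr y has_real_derivative Fr' y x) (at x)" using Fr_has_derivative[OF perm yS k] that pqr by auto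
  qed (use that pqr Fker_eq_Fr[OF perm yS k] in auto)
  show "Fr' y x2 < Fr' y x1" if "p < x1" "x1 < x2" "x2 < r" for x1 x2
    using Fr'_strict_decreasing[OF perm yS k, of x1 x2] that pqr by auto
qed (use pqr in auto)

lemma Fker_arc_max_unique:
  assumes perm: "\<sigma> permutes {1..n}" and yS: "y \<in> simplex_sigma n \<sigma>" and k: "k \<le> n"
  shows "\<exists>!t. t \<in> Iint n \<sigma> y k \<and> Fker n K y t = Sup (Fker n K y ` Iint n \<sigma> y k)"
proof -
  let ?F = "Fker n K y" and ?I = "Iint n \<sigma> y k"
  have I: "?I = {node n \<sigma> y k .. node n \<sigma> y (Suc k)}" by (rule Iint_node)
  obtain x where x: "x \<in> ?I" "\<forall>t\<in>?I. ?F t \<le> ?F x"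
    using continuous_attains_sup[OF _ _ Fker_arc_continuous_finite(1)[OF perm yS k]]
      node_less_Suc[OF yS k] I by auto
  have Sup_eq: "Sup (?F ` ?I) = ?F x"
    by (rule antisym) (use x in \<open>auto intro: SUP_least SUP_upper\<close>)
  have no_second: False if t12: "t1 \<in> ?I" "t2 \<in> ?I" "t1 < t2" "?F t1 = ?F x" "?F t2 = ?F x" for t1 t2
  proof -
    let ?m = "(t1 + t2) / 2" and ?g = "\<lambda>t. real_of_ereal (?F t)"
    have m: "node n \<sigma> y k < ?m" "?m < node n \<sigma> y (Suc k)" "?m \<in> ?I" using t12 I by auto
    have Fm: "?F ?m = ereal (Fr y ?m)" using Fker_eq_Fr[OF perm yS k] m by auto
    then have "?F x \<noteq> -\<infinity>" using x m by (metis MInfty_neq_ereal(1) ereal_infty_less_eq(2))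
    moreover have "?F x \<noteq> \<infinity>" using Fker_arc_continuous_finite(2)[OF perm yS k] x by auto
    ultimately obtain M where M: "?F x = ereal M" by (cases "?F x") auto
    have "(?g t2 - ?g ?m) / (t2 - ?m) < (?g ?m - ?g t1) / (?m - t1)"
      by (rule Fker_slopes_decrease[OF perm yS k]) (use t12 I M in auto)
    moreover have "t2 - ?m = ?m - t1" "?m - t1 > 0" using t12 by (simp_all add: field_simps)
    ultimately have "(M - Fr y ?m) / (?m - t1) < (Fr y ?m - M) / (?m - t1)" using t12 Fm M by simp
    then have "M - Fr y ?m < Fr y ?m - M" using \<open>?m - t1 > 0\<close> by (simp add: divide_less_cancel)
    then have "?F x < ?F ?m" using Fm M by simp
    then show False using x m by auto
  qed
  show ?thesis
  proof (rule ex1I[of _ x])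
    show "x \<in> ?I \<and> ?F x = Sup (?F ` ?I)" using x Sup_eq by auto
    fix t assume "t \<in> ?I \<and> ?F t = Sup (?F ` ?I)"
    then show "t = x" using no_second[of t x] no_second[of x t] x Sup_eq by (metis linorder_neqE)
  qed
qed

lemma zval_maximises:
  assumes perm: "\<sigma> permutes {1..n}" and yS: "y \<in> simplex_sigma n \<sigma>" and k: "k \<le> n"
  shows "mval n K \<sigma> y k = real_of_ereal (Fker n K y (zval n K \<sigma> y k))"
    and "\<And>t. t \<in> Iint n \<sigma> y k \<Longrightarrow> t \<noteq> zval n K \<sigma> y k \<Longrightarrow> Fker n K y t < Fker n K y (zval n K \<sigma> y k)"
proof -
  let ?z = "zval n K \<sigma> y k" and ?S = "Sup (Fker n K y ` Iint n \<sigma> y k)"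
  have z: "?z \<in> Iint n \<sigma> y k" "Fker n K y ?z = ?S"
    using theI'[OF Fker_arc_max_unique[OF perm yS k]] unfolding zval_def by auto
  then show "mval n K \<sigma> y k = real_of_ereal (Fker n K y ?z)" by (simp add: mval_def)
  fix t assume t: "t \<in> Iint n \<sigma> y k" "t \<noteq> ?z"
  then have "Fker n K y t \<le> Fker n K y ?z" using z by (auto intro: SUP_upper)
  moreover have "Fker n K y t \<noteq> Fker n K y ?z" using Fker_arc_max_unique[OF perm yS k] z t by auto
  ultimately show "Fker n K y t < Fker n K y ?z" by auto
qed


lemma Fr_update:
  assumes j: "j \<in> {1..n}"
  shows "Fr (y(j := s)) t = Fr y t - Kr j (t - y j) + Kr j (t - s)"
proof -
  have jn: "j \<in> {..n}" using j by auto
  have "(\<Sum>i\<in>{..n} - {j}. Kr i (t - ext_pt n (y(j := s)) i)) = (\<Sum>i\<in>{..n} - {j}. Kr i (t - ext_pt n y i))"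
    by (rule sum.cong) (auto simp: ext_pt_update[OF j])
  then show ?thesis unfolding Fr_def
    using sum.remove[OF _ jn, of "\<lambda>i. Kr i (t - ext_pt n (y(j := s)) i)"]
      sum.remove[OF _ jn, of "\<lambda>i. Kr i (t - ext_pt n y i)"] ext_pt_coord[OF j] ext_pt_update[OF j]
    by simp
qed

lemma zval_peak:
  assumes perm: "\<sigma> permutes {1..n}" and yS: "y \<in> simplex_sigma n \<sigma>" and k: "k \<le> n"
    and z_arc: "node n \<sigma> y k < zval n K \<sigma> y k" "zval n K \<sigma> y k < node n \<sigma> y (Suc k)"
  shows "mval n K \<sigma> y k = Fr y (zval n K \<sigma> y k)"
    and "\<And>t. node n \<sigma> y k < t \<Longrightarrow> t < node n \<sigma> y (Suc k) \<Longrightarrow> t \<noteq> zval n K \<sigma> y k \<Longrightarrow>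
           Fr y t < Fr y (zval n K \<sigma> y k)"
proof -
  have F_z: "Fker n K y (zval n K \<sigma> y k) = ereal (Fr y (zval n K \<sigma> y k))"
    using Fker_eq_Fr[OF perm yS k] z_arc by simp
  then show "mval n K \<sigma> y k = Fr y (zval n K \<sigma> y k)" using zval_maximises(1)[OF perm yS k] by simp
  fix t assume t: "node n \<sigma> y k < t" "t < node n \<sigma> y (Suc k)" "t \<noteq> zval n K \<sigma> y k"
  then have "Fker n K y t < Fker n K y (zval n K \<sigma> y k)"
    using zval_maximises(2)[OF perm yS k] by (auto simp: Iint_node)
  then show "Fr y t < Fr y (zval n K \<sigma> y k)" using F_z Fker_eq_Fr[OF perm yS k, of t] t by simp
qed

lemma Fker_less_beyond:
  assumes perm: "\<sigma> permutes {1..n}" and yS: "y \<in> simplex_sigma n \<sigma>" and k: "k \<le> n"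
    and I: "z \<in> Iint n \<sigma> y k" "t \<in> Iint n \<sigma> y k"
    and between: "z < q \<and> q < t \<or> t < q \<and> q < z"
    and peak: "Fker n K y z \<noteq> -\<infinity>" "Fker n K y q \<le> Fker n K y z"
  shows "Fker n K y t < Fker n K y q"
proof -
  let ?F = "Fker n K y" and ?g = "\<lambda>t. real_of_ereal (Fker n K y t)"
  have q_real: "?F q = ereal (Fr y q)"
    using Fker_eq_Fr[OF perm yS k, of q] I between by (auto simp: Iint_node)
  obtain Z where z_real: "?F z = ereal Z"
    using peak(1) Fker_arc_continuous_finite(2)[OF perm yS k I(1)] by (cases "?F z") auto
  have "?g q \<le> ?g z" using peak(2) q_real z_real by simp
  show ?thesis
  proof (cases "?F t = -\<infinity>")
    case True
    then show ?thesis unfolding q_real by simp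
  next
    case False
    then obtain T where t_real: "?F t = ereal T"
      using Fker_arc_continuous_finite(2)[OF perm yS k I(2)] by (cases "?F t") auto
    from between have "?g t < ?g q"
    proof
      assume zqt: "z < q \<and> q < t"
      have "(?g t - ?g q) / (t - q) < (?g q - ?g z) / (q - z)"
        using I zqt False peak(1) by (intro Fker_slopes_decrease[OF perm yS k]) (auto simp: Iint_node)
      also have "\<dots> \<le> 0" using \<open>?g q \<le> ?g z\<close> zqt by (simp add: divide_nonpos_pos)
      finally show ?thesis using zqt by (simp add: divide_less_0_iff)
    next
      assume tqz: "t < q \<and> q < z"
      have "0 \<le> (?g z - ?g q) / (z - q)" using \<open>?g q \<le> ?g z\<close> tqz by simp
      also have "\<dots> < (?g q - ?g t) / (q - t)"
        using I tqz False peak(1) by (intro Fker_slopes_decrease[OF perm yS k]) (auto simp: Iint_node)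
      finally show ?thesis using tqz by (simp add: zero_less_divide_iff)
    qed
    then show ?thesis using t_real q_real by simp
  qed
qed

lemma mval_localized:
  assumes perm: "\<sigma> permutes {1..n}" and yS: "y \<in> simplex_sigma n \<sigma>" and k: "k \<le> n"
    and arc: "node n \<sigma> y k < z - \<epsilon>" "z + \<epsilon> < node n \<sigma> y (Suc k)" "0 < \<epsilon>"
    and peak: "Fr y (z - \<epsilon>) < Fr y z" "Fr y (z + \<epsilon>) < Fr y z"
    and bound: "\<And>t. \<bar>t - z\<bar> \<le> \<epsilon> \<Longrightarrow> Fr y t \<le> U"
  shows "Fr y z \<le> mval n K \<sigma> y k \<and> mval n K \<sigma> y k \<le> U"
proof -
  let ?F = "Fker n K y" and ?I = "Iint n \<sigma> y k"
  have near: "?F t = ereal (Fr y t)" if "\<bar>t - z\<bar> \<le> \<epsilon>" for t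
    using Fker_eq_Fr[OF perm yS k] that arc by (auto simp: abs_le_iff)
  have in_I: "t \<in> ?I" if "\<bar>t - z\<bar> \<le> \<epsilon>" for t using that arc by (auto simp: Iint_node abs_le_iff)
  have "?F t \<le> ereal U" if t: "t \<in> ?I" for t
  proof -
    consider "\<bar>t - z\<bar> \<le> \<epsilon>" | "z + \<epsilon> < t" | "t < z - \<epsilon>" by linarith
    then show ?thesis
    proof cases
      case 1
      then show ?thesis using near bound by simp
    next
      case 2
      then have "?F t < ?F (z + \<epsilon>)"
        using near[of z] near[of "z + \<epsilon>"] in_I[of z] peak arc t
        by (intro Fker_less_beyond[OF perm yS k, of z]) auto
      moreover have "?F (z + \<epsilon>) \<le> ereal U" using near[of "z + \<epsilon>"] bound[of "z + \<epsilon>"] arc by simp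
      ultimately show ?thesis by simp
    next
      case 3
      then have "?F t < ?F (z - \<epsilon>)"
        using near[of z] near[of "z - \<epsilon>"] in_I[of z] peak arc t
        by (intro Fker_less_beyond[OF perm yS k, of z]) auto
      moreover have "?F (z - \<epsilon>) \<le> ereal U" using near[of "z - \<epsilon>"] bound[of "z - \<epsilon>"] arc by simp
      ultimately show ?thesis by simp
    qed
  qed
  then have "Sup (?F ` ?I) \<le> ereal U" by (intro SUP_least)
  moreover have "ereal (Fr y z) \<le> Sup (?F ` ?I)"
    using near[of z] in_I[of z] arc(3) by (auto intro: SUP_upper2)
  ultimately show ?thesis unfolding mval_def by (cases "Sup (?F ` ?I)") auto
qed

lemma mval_perturbed:
  assumes perm: "\<sigma> permutes {1..n}" and yS: "y \<in> simplex_sigma n \<sigma>" and k: "k \<le> n"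
    and arc: "node n \<sigma> y k < z - \<epsilon>" "z + \<epsilon> < node n \<sigma> y (Suc k)" "0 < \<epsilon>"
    and peak: "\<And>t. \<bar>t - z\<bar> \<le> \<epsilon> \<Longrightarrow> G t \<le> G z" "G (z - \<epsilon>) \<le> G z - \<Delta>" "G (z + \<epsilon>) \<le> G z - \<Delta>"
    and close: "\<And>t. \<bar>t - z\<bar> \<le> \<epsilon> \<Longrightarrow> \<bar>Fr y t - G t\<bar> \<le> e" and "2 * e < \<Delta>"
  shows "\<bar>mval n K \<sigma> y k - G z\<bar> \<le> e"
proof -
  have "Fr y z \<le> mval n K \<sigma> y k \<and> mval n K \<sigma> y k \<le> G z + e"
  proof (rule mval_localized[OF perm yS k arc])
    show "Fr y (z - \<epsilon>) < Fr y z" "Fr y (z + \<epsilon>) < Fr y z"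
      using close[of z] close[of "z - \<epsilon>"] close[of "z + \<epsilon>"] peak(2,3) \<open>2 * e < \<Delta>\<close> arc(3)
      by (auto simp: abs_le_iff)
    show "Fr y t \<le> G z + e" if "\<bar>t - z\<bar> \<le> \<epsilon>" for t
      using close[OF that] peak(1)[OF that] by (auto simp: abs_le_iff)
  qed
  then show ?thesis using close[of z] arc(3) by (auto simp: abs_le_iff)
qed

lemma Kr_uniform_linearization:
  assumes "j \<le> n" "-2 * pi < c" "c < 2 * pi" "c \<noteq> 0" "\<eta> > 0"
  obtains \<rho> where "\<rho> > 0"
    "\<And>u v. \<bar>u - c\<bar> < \<rho> \<Longrightarrow> \<bar>v - c\<bar> < \<rho> \<Longrightarrow>
       \<bar>Kr j v - Kr j u - (v - u) * dK j (wrap c)\<bar> \<le> \<eta> * \<bar>v - u\<bar>"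
proof -
  define r where "r = min \<bar>c\<bar> (2 * pi - \<bar>c\<bar>)"
  have "r > 0" using assms by (auto simp: r_def)
  have "(Kr j has_real_derivative dK j (wrap x)) (at x)" if "\<bar>x - c\<bar> < r" for x
    using that assms by (intro Kr_has_derivative) (auto simp: r_def abs_if split: if_split_asm)
  from uniform_linearization[OF \<open>r > 0\<close> this isCont_dK_wrap[OF assms(1-4)] \<open>\<eta> > 0\<close>]
  obtain \<rho> where "\<rho> > 0" "\<And>u v. \<bar>u - c\<bar> < \<rho> \<Longrightarrow> \<bar>v - c\<bar> < \<rho> \<Longrightarrow>
       \<bar>Kr j v - Kr j u - (v - u) * dK j (wrap c)\<bar> \<le> \<eta> * \<bar>v - u\<bar>"
    by blast
  with that show ?thesis by blast
qed

lemma zval_strict_peak: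
  assumes perm: "\<sigma> permutes {1..n}" and yS: "y \<in> simplex_sigma n \<sigma>" and k: "k \<le> n"
    and z_arc: "node n \<sigma> y k < zval n K \<sigma> y k" "zval n K \<sigma> y k < node n \<sigma> y (Suc k)"
    and "\<rho> > 0"
  defines "z \<equiv> zval n K \<sigma> y k"
  obtains \<epsilon> \<Delta> where "0 < \<epsilon>" "4 * \<epsilon> \<le> \<rho>" "node n \<sigma> y k + 4 * \<epsilon> \<le> z" "z + 4 * \<epsilon> \<le> node n \<sigma> y (Suc k)"
    and "0 < \<Delta>" "\<And>t. \<bar>t - z\<bar> \<le> \<epsilon> \<Longrightarrow> Fr y t \<le> Fr y z"
    and "Fr y (z - \<epsilon>) \<le> Fr y z - \<Delta>" "Fr y (z + \<epsilon>) \<le> Fr y z - \<Delta>"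
proof -
  define \<epsilon> where "\<epsilon> = min \<rho> (min (z - node n \<sigma> y k) (node n \<sigma> y (Suc k) - z)) / 4"
  have \<epsilon>: "0 < \<epsilon>" "4 * \<epsilon> \<le> \<rho>" "node n \<sigma> y k + 4 * \<epsilon> \<le> z" "z + 4 * \<epsilon> \<le> node n \<sigma> y (Suc k)"
    using \<open>\<rho> > 0\<close> z_arc unfolding \<epsilon>_def by (auto simp: z_def)
  have peak: "Fr y t < Fr y z" if "\<bar>t - z\<bar> \<le> \<epsilon>" "t \<noteq> z" for t
    using zval_peak(2)[OF perm yS k z_arc, of t] that \<epsilon> by (auto simp: z_def abs_le_iff)
  then have "Fr y t \<le> Fr y z" if "\<bar>t - z\<bar> \<le> \<epsilon>" for t using that by (cases "t = z") force+
  moreover define \<Delta> where "\<Delta> = min (Fr y z - Fr y (z - \<epsilon>)) (Fr y z - Fr y (z + \<epsilon>))"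
  moreover have "0 < \<Delta>" using peak[of "z - \<epsilon>"] peak[of "z + \<epsilon>"] \<epsilon>(1) by (auto simp: \<Delta>_def)
  ultimately show ?thesis using that[of \<epsilon> \<Delta>] \<epsilon> by (auto simp: \<Delta>_def)
qed

lemma mval_update_approx:
  assumes perm: "\<sigma> permutes {1..n}" and yS: "y \<in> simplex_sigma n \<sigma>" and k: "k \<le> n"
    and j: "j \<in> {1..n}"
    and z_arc: "node n \<sigma> y k < zval n K \<sigma> y k" "zval n K \<sigma> y k < node n \<sigma> y (Suc k)"
    and "\<eta> > 0"
  defines "D \<equiv> dK j (wrap (zval n K \<sigma> y k - y j))"
  shows "\<exists>\<delta>>0. \<forall>s. \<bar>s - y j\<bar> < \<delta> \<longrightarrow>
           \<bar>mval n K \<sigma> (y(j := s)) k - mval n K \<sigma> y k + (s - y j) * D\<bar> \<le> \<eta> * \<bar>s - y j\<bar>"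
proof -
  define z where "z = zval n K \<sigma> y k"
  have "-2 * pi < z - y j" "z - y j < 2 * pi" "z - y j \<noteq> 0"
    using arc_offset_bounds[OF perm yS k z_arc, of j] j by (auto simp: z_def ext_pt_coord)
  then obtain \<rho> where "\<rho> > 0" and lin: "\<And>u v. \<bar>u - (z - y j)\<bar> < \<rho> \<Longrightarrow> \<bar>v - (z - y j)\<bar> < \<rho> \<Longrightarrow>
      \<bar>Kr j v - Kr j u - (v - u) * D\<bar> \<le> \<eta> * \<bar>v - u\<bar>"
    using Kr_uniform_linearization[of j "z - y j" \<eta>] j \<open>\<eta> > 0\<close> unfolding D_def z_def by auto
  obtain \<epsilon> \<Delta> where \<epsilon>: "0 < \<epsilon>" "4 * \<epsilon> \<le> \<rho>" "node n \<sigma> y k + 4 * \<epsilon> \<le> z"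
      "z + 4 * \<epsilon> \<le> node n \<sigma> y (Suc k)"
    and "0 < \<Delta>" and peak: "\<And>t. \<bar>t - z\<bar> \<le> \<epsilon> \<Longrightarrow> Fr y t \<le> Fr y z"
    and margin: "Fr y (z - \<epsilon>) \<le> Fr y z - \<Delta>" "Fr y (z + \<epsilon>) \<le> Fr y z - \<Delta>"
    using zval_strict_peak[OF perm yS k z_arc \<open>\<rho> > 0\<close>] unfolding z_def by blast
  obtain g where "g > 0" and g: "\<And>s. \<bar>s - y j\<bar> < g \<Longrightarrow> y(j := s) \<in> simplex_sigma n \<sigma>"
    using simplex_sigma_update[OF yS j] by blast
  define \<delta> where "\<delta> = min (min \<epsilon> g) (\<Delta> / (2 * \<eta>))"
  have \<delta>: "0 < \<delta>" "\<delta> \<le> \<epsilon>" "\<delta> \<le> g" "\<delta> * (2 * \<eta>) \<le> \<Delta>"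
    using \<epsilon>(1) \<open>g > 0\<close> \<open>0 < \<Delta>\<close> \<open>\<eta> > 0\<close> by (auto simp: \<delta>_def simp flip: pos_le_divide_eq)
  show ?thesis
  proof (intro exI[of _ \<delta>] conjI allI impI)
    show "0 < \<delta>" by (rule \<delta>(1))
    fix s assume s: "\<bar>s - y j\<bar> < \<delta>"
    let ?G = "\<lambda>t. Fr y t - (s - y j) * D"
    have "\<bar>mval n K \<sigma> (y(j := s)) k - ?G z\<bar> \<le> \<eta> * \<bar>s - y j\<bar>"
    proof (rule mval_perturbed[OF perm _ k, where G = ?G and z = z and \<epsilon> = \<epsilon> and \<Delta> = \<Delta>])
      show "y(j := s) \<in> simplex_sigma n \<sigma>" using g s \<delta> by auto
      show "node n \<sigma> (y(j := s)) k < z - \<epsilon>" "z + \<epsilon> < node n \<sigma> (y(j := s)) (Suc k)"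
        using node_update_dist[OF j, of \<sigma> y s k] node_update_dist[OF j, of \<sigma> y s "Suc k"] s \<delta> \<epsilon>
        by (auto simp: abs_le_iff)
      show "\<bar>Fr (y(j := s)) t - ?G t\<bar> \<le> \<eta> * \<bar>s - y j\<bar>" if "\<bar>t - z\<bar> \<le> \<epsilon>" for t
      proof -
        have "\<bar>Kr j (t - s) - Kr j (t - y j) - ((t - s) - (t - y j)) * D\<bar> \<le> \<eta> * \<bar>(t - s) - (t - y j)\<bar>"
          using that s \<delta> \<epsilon> by (intro lin) (auto simp: abs_le_iff abs_less_iff)
        then show ?thesis by (simp add: Fr_update[OF j] algebra_simps abs_minus_commute)
      qed
      have "2 * (\<eta> * \<bar>s - y j\<bar>) < 2 * (\<eta> * \<delta>)" using mult_strict_left_mono[OF s \<open>\<eta> > 0\<close>] by simp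
      also have "\<dots> \<le> \<Delta>" using \<delta>(4) by (simp add: mult_ac)
      finally show "2 * (\<eta> * \<bar>s - y j\<bar>) < \<Delta>" .
    qed (use \<epsilon> peak margin in auto)
    then show "\<bar>mval n K \<sigma> (y(j := s)) k - mval n K \<sigma> y k + (s - y j) * D\<bar> \<le> \<eta> * \<bar>s - y j\<bar>"
      using zval_peak(1)[OF perm yS k z_arc] by (simp add: z_def algebra_simps)
  qed
qed

lemma mval_has_derivative:
  assumes perm: "\<sigma> permutes {1..n}" and yS: "y \<in> simplex_sigma n \<sigma>" and k: "k \<le> n"
    and j: "j \<in> {1..n}"
    and z_arc: "node n \<sigma> y k < zval n K \<sigma> y k" "zval n K \<sigma> y k < node n \<sigma> y (Suc k)"
  shows "((\<lambda>s. mval n K \<sigma> (y(j := s)) k) has_real_derivative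
           - dK j (wrap (zval n K \<sigma> y k - y j))) (at (y j))"
  using mval_update_approx[OF assms] by (intro DERIV_if_linear_approx) simp

lemma jacobian_entry:
  assumes perm: "\<sigma> permutes {1..n}" and yS: "y \<in> simplex_sigma n \<sigma>"
    and z_int: "\<And>k. k \<le> n \<Longrightarrow> zval n K \<sigma> y k \<in> interior (Iint n \<sigma> y k)"
    and "r < n" "c < n"
  shows "jacobian n K \<sigma> y $$ (r, c) =
           dK (Suc c) (wrap (zval n K \<sigma> y r - y (Suc c)))
         - dK (Suc c) (wrap (zval n K \<sigma> y (Suc r) - y (Suc c)))"
proof -
  have der: "((\<lambda>s. mval n K \<sigma> (y(Suc c := s)) k) has_real_derivative
      - dK (Suc c) (wrap (zval n K \<sigma> y k - y (Suc c)))) (at (y (Suc c)))" if "k \<le> n" for k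
    using mval_has_derivative[OF perm yS that _ zval_in_arc[OF z_int that]] \<open>c < n\<close> by auto
  have "((\<lambda>s. Delta n K \<sigma> (y(Suc c := s)) (Suc r)) has_real_derivative
      - dK (Suc c) (wrap (zval n K \<sigma> y (Suc r) - y (Suc c)))
      - - dK (Suc c) (wrap (zval n K \<sigma> y r - y (Suc c)))) (at (y (Suc c)))"
    unfolding Delta_def using DERIV_diff[OF der der, of "Suc r" r] \<open>r < n\<close> by simp
  then show ?thesis using \<open>r < n\<close> \<open>c < n\<close> by (simp add: jacobian_def DERIV_imp_deriv)
qed

lemma jacobian_column_dominant:
  assumes perm: "\<sigma> permutes {1..n}" and yS: "y \<in> simplex_sigma n \<sigma>"
    and z_int: "\<And>k. k \<le> n \<Longrightarrow> zval n K \<sigma> y k \<in> interior (Iint n \<sigma> y k)" and "r0 < n"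
  shows "\<sigma> (Suc r0) - 1 < n \<and>
    (\<Sum>r\<in>{..<n} - {r0}. \<bar>jacobian n K \<sigma> y $$ (r, \<sigma> (Suc r0) - 1)\<bar>)
      < \<bar>jacobian n K \<sigma> y $$ (r0, \<sigma> (Suc r0) - 1)\<bar>"
proof -
  define j where "j = \<sigma> (Suc r0)"
  define z where "z k = zval n K \<sigma> y k" for k
  define P where "P = node n \<sigma> y (Suc r0)"
  define T where "T k = z k - P + (if k \<le> r0 then 2 * pi else 0)" for k
  define c where "c = j - 1"
  have j: "j \<in> {1..n}" "c < n" "Suc c = j"
    using permutes_in_image[OF perm, of "Suc r0"] \<open>r0 < n\<close> by (auto simp: j_def c_def)
  have "y j = P" using j by (simp add: P_def node_def j_def[symmetric] ext_pt_coord)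
  have z_arc: "node n \<sigma> y k < z k" "z k < node n \<sigma> y (Suc k)" if "k \<le> n" for k
    using zval_in_arc[OF z_int that] by (simp_all add: z_def)
  have z_mono: "z k < z k'" if "k < k'" "k' \<le> n" for k k'
    using z_arc[of k] z_arc[of k'] node_le[OF yS, of "Suc k" k'] that by force
  have wrap_eq: "wrap (z k - y j) = T k" if "k \<le> n" for k
  proof (cases "k \<le> r0")
    case True
    then have "z k < P" using z_arc[OF that] node_le[OF yS, of "Suc k" "Suc r0"] \<open>r0 < n\<close>
      by (auto simp: P_def)
    then show ?thesis using True \<open>y j = P\<close> by (simp add: wrap_def T_def)
  next
    case False
    then have "P < z k" using z_arc[OF that] node_le[OF yS, of "Suc r0" k] that by (auto simp: P_def)
    then show ?thesis using False \<open>y j = P\<close> by (simp add: wrap_def T_def)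
  qed
  have entry: "jacobian n K \<sigma> y $$ (r, c) = dK j (T r) - dK j (T (Suc r))" if "r < n" for r
    using jacobian_entry[OF perm yS z_int that j(2)] j(3) wrap_eq that by (simp add: z_def)
  have "(\<Sum>r\<in>{..<n} - {r0}. \<bar>dK j (T r) - dK j (T (Suc r))\<bar>) < \<bar>dK j (T r0) - dK j (T (Suc r0))\<bar>"
    unfolding T_def
  proof (rule wrapped_differences_dominant[OF z_mono])
    show "0 < z 0" "z n < 2 * pi" using z_arc[of 0] z_arc[of n] node_ends[OF perm] by auto
    show "r0 < n" "z r0 < P" "P < z (Suc r0)"
      using z_arc[of r0] z_arc[of "Suc r0"] \<open>r0 < n\<close> by (auto simp: P_def)
    show "dK j b < dK j a" if "0 < a" "a < b" "b < 2 * pi" for a b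
      using dK_strict_decreasing j(1) that by auto
  qed
  moreover have "(\<Sum>r\<in>{..<n} - {r0}. \<bar>jacobian n K \<sigma> y $$ (r, c)\<bar>)
      = (\<Sum>r\<in>{..<n} - {r0}. \<bar>dK j (T r) - dK j (T (Suc r))\<bar>)"
    by (intro sum.cong) (auto simp: entry)
  ultimately show ?thesis using entry[OF \<open>r0 < n\<close>] j(2) by (simp add: c_def j_def)
qed

end

theorem proposition9p2:
  fixes n :: nat and K :: "nat \<Rightarrow> real \<Rightarrow> ereal"
    and \<sigma> :: "nat \<Rightarrow> nat" and y :: "nat \<Rightarrow> real"
  assumes periodic: "\<And>j t. j \<le> n \<Longrightarrow> K j (t + 2 * pi) = K j t"
    and real_valued: "\<And>j t. j \<le> n \<Longrightarrow> t \<in> {0<..<2 * pi} \<Longrightarrow> K j t \<noteq> -\<infinity> \<and> K j t \<noteq> \<infinity>"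
    and concave: "\<And>j. j \<le> n \<Longrightarrow> concave_on {0<..<2 * pi} (\<lambda>t. real_of_ereal (K j t))"
    and not_pinf: "\<And>j. j \<le> n \<Longrightarrow> K j 0 \<noteq> \<infinity>"
    and lim0: "\<And>j. j \<le> n \<Longrightarrow> (K j \<longlongrightarrow> K j 0) (at_right 0)"
    and lim2pi: "\<And>j. j \<le> n \<Longrightarrow> (K j \<longlongrightarrow> K j 0) (at_left (2 * pi))"
    and C2: "\<And>j. j \<le> n \<Longrightarrow> C2_on {0<..<2 * pi} (\<lambda>t. real_of_ereal (K j t))"
    and neg2: "\<And>j t. j \<le> n \<Longrightarrow> t \<in> {0<..<2 * pi} \<Longrightarrow>
                  deriv (deriv (\<lambda>t. real_of_ereal (K j t))) t < 0"
    and perm: "\<sigma> permutes {1..n}"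
    and yS: "y \<in> simplex_sigma n \<sigma>"
    and z_int: "\<And>k. k \<le> n \<Longrightarrow> zval n K \<sigma> y k \<in> interior (Iint n \<sigma> y k)"
  shows "Determinant.det (jacobian n K \<sigma> y) \<noteq> 0"
proof -
  \<comment> \<open>Concavity is implied by \<open>K\<^sub>j'' < 0\<close>.\<close>
  interpret smooth_kernels n K
    using periodic real_valued not_pinf lim0 lim2pi C2 neg2 by unfold_locales
  show ?thesis
  proof (rule det_nonzero_if_column_dominant[where p = "\<lambda>r0. \<sigma> (Suc r0) - 1"])
    show "jacobian n K \<sigma> y \<in> carrier_mat n n" by (simp add: jacobian_def)
  qed (rule jacobian_column_dominant[OF perm yS z_int])
qed

end
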